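(* Let $\mathcal S$ be a trajectory set satisfying (nL), i.e. $\bar\sigma(0)\ge0$ holds in the shifted conditional space $\mathcal S^{(S,j)}$ for every $S\in\mathcal S$ and $j\in\mathbb N_0$. Then $\mathcal S$ satisfies (nK), i.e. for every $S\in\mathcal S$ and $j\in\mathbb N_0$ the shifted conditional space $\mathcal S^{(S,j)}$ satisfies (LOP) and (K).
   Context: Fix $s_0\in\mathbb R$. A trajectory set (with initial value $s_0$) is any set $\mathcal S$ of real sequences $S=(S_j)_{j\in\mathbb N_0}$ with $S_0=s_0$. All of the following notions are defined for an arbitrary trajectory set $\mathcal T$ (in place of $\mathcal S$). A simple portfolio $(V,n,H)$ consists of $V\in\mathbb R$, $n\in\mathbb N$ and nonanticipating functions $H_i:\mathcal T\to\mathbb R$, $0\le i\le n-1$ (i.e. $H_i(S)=h_i(S_0,\dots,S_i)$ for some arbitrary $h_i:\mathbb R^{i+1}\to\mathbb R$). Its wealth is $\Pi^{V,n,H}_j(S)=V+\sum_{i=0}^{\min\{j,n\}-1}H_i(S)(S_{i+1}-S_i)$ and $\Pi^{V,n,H}_\infty:=\Pi^{V,n,H}_n$; it is positive if $V\ge0$ and $\Pi^{V,n,H}_\infty\ge0$ on $\mathcal T$. A generalized portfolio is a sequence $(V_m,n_m,H_m)_{m\in\mathbb N_0}$ of simple portfolios, positive for every $m\ge1$; it is a positive generalized portfolio if moreover $\Pi^{V_0,n_0,H_0}_j\equiv0$ for all $j$. A map $f:\mathcal T\to[-\infty,+\infty]$ is superhedged with initial endowment $V=\sum_{m=0}^\infty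 V_m\in(-\infty,+\infty]$ by such a portfolio if $f\le\sum_{m=0}^\infty\Pi^{V_m,n_m,H_m}_\infty$ on $\mathcal T$. For $f\ge0$, $\bar I(f)$ is the infimum of initial endowments of positive generalized portfolios superhedging $f$; $\bar\sigma(f)$ is the infimum of initial endowments of generalized portfolios superhedging $f$. Let $\mathcal E=\{\Pi^{V,n,H}_\infty\}$ over all simple portfolios. (LOP): whenever two simple portfolios have equal terminal wealth $\Pi_\infty$ on all of $\mathcal T$, their initial endowments coincide; under (LOP), $I(\Pi^{V,n,H}_\infty):=V$ is well defined on $\mathcal E$. (K): $I(f)+\bar I(f^-)\le\bar I(f^+)$ for every $f\in\mathcal E$. For $S\in\mathcal S$, $j\in\mathbb N_0$, the conditional space is $\mathcal S_{(S,j)}=\{\tilde S\in\mathcal S:(\tilde S_0,\dots,\tilde S_j)=(S_0,\dots,S_j)\}$ and the shifted conditional space is $\mathcal S^{(S,j)}=\{(\tilde S_{j+i})_{i\in\mathbb N_0}:\tilde S\in\mathcal S_{(S,j)}\}$, a trajectory set with initial value $S_j$. *)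

theory Defs
  imports "HOL-Analysis.Analysis"
begin

text \<open>A trading strategy is given by the functions
\<open>h i :: real list \<Rightarrow> real\<close>, so that \<open>H_i(S) = h_i(S_0,...,S_i)\<close> is nonanticipating by
construction.\<close>

type_synonym traj = "nat \<Rightarrow> real"
type_synonym strategy = "nat \<Rightarrow> real list \<Rightarrow> real"
type_synonym simple_pf = "real \<times> nat \<times> strategy"

definition trajectory_set :: "real \<Rightarrow> traj set \<Rightarrow> bool" where
  "trajectory_set s0 T \<longleftrightarrow> (\<forall>S\<in>T. S 0 = s0)"

definition Hval :: "strategy \<Rightarrow> nat \<Rightarrow> traj \<Rightarrow> real" where
  "Hval h i S = h i (map S [0..<Suc i])"

definition wealth :: "real \<Rightarrow> nat \<Rightarrow> strategy \<Rightarrow> nat \<Rightarrow> traj \<Rightarrow> real" where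
  "wealth V n h j S = V + (\<Sum>i<min j n. Hval h i S * (S (Suc i) - S i))"

definition wealth_inf :: "real \<Rightarrow> nat \<Rightarrow> strategy \<Rightarrow> traj \<Rightarrow> real" where
  "wealth_inf V n h S = wealth V n h n S"

definition simple_portfolio :: "simple_pf \<Rightarrow> bool" where
  "simple_portfolio P \<longleftrightarrow> fst (snd P) \<ge> 1"

definition positive_simple :: "traj set \<Rightarrow> simple_pf \<Rightarrow> bool" where
  "positive_simple T P \<longleftrightarrow> simple_portfolio P \<and> fst P \<ge> 0 \<and>
     (\<forall>S\<in>T. wealth_inf (fst P) (fst (snd P)) (snd (snd P)) S \<ge> 0)"

definition gen_portfolio :: "traj set \<Rightarrow> (nat \<Rightarrow> simple_pf) \<Rightarrow> bool" where
  "gen_portfolio T P \<longleftrightarrow> simple_portfolio (P 0) \<and> (\<forall>m\<ge>1. positive_simple T (P m))"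

definition pos_gen_portfolio :: "traj set \<Rightarrow> (nat \<Rightarrow> simple_pf) \<Rightarrow> bool" where
  "pos_gen_portfolio T P \<longleftrightarrow> gen_portfolio T P \<and>
     (\<forall>j. \<forall>S\<in>T. wealth (fst (P 0)) (fst (snd (P 0))) (snd (snd (P 0))) j S = 0)"

definition endowment :: "(nat \<Rightarrow> simple_pf) \<Rightarrow> ereal" where
  "endowment P = ereal (fst (P 0)) + (\<Sum>m. ereal (fst (P (Suc m))))"

definition gen_wealth :: "(nat \<Rightarrow> simple_pf) \<Rightarrow> traj \<Rightarrow> ereal" where
  "gen_wealth P S =
     ereal (wealth_inf (fst (P 0)) (fst (snd (P 0))) (snd (snd (P 0))) S) +
     (\<Sum>m. ereal (wealth_inf (fst (P (Suc m))) (fst (snd (P (Suc m)))) (snd (snd (P (Suc m)))) S))"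

definition superhedges :: "traj set \<Rightarrow> (traj \<Rightarrow> ereal) \<Rightarrow> (nat \<Rightarrow> simple_pf) \<Rightarrow> bool" where
  "superhedges T f P \<longleftrightarrow> (\<forall>S\<in>T. f S \<le> gen_wealth P S)"

definition barI :: "traj set \<Rightarrow> (traj \<Rightarrow> ereal) \<Rightarrow> ereal" where
  "barI T f = Inf {endowment P | P. pos_gen_portfolio T P \<and> superhedges T f P}"

definition barsigma :: "traj set \<Rightarrow> (traj \<Rightarrow> ereal) \<Rightarrow> ereal" where
  "barsigma T f = Inf {endowment P | P. gen_portfolio T P \<and> superhedges T f P}"

definition LOP :: "traj set \<Rightarrow> bool" where
  "LOP T \<longleftrightarrow> (\<forall>V1 n1 h1 V2 n2 h2. simple_portfolio (V1, n1, h1) \<longrightarrow> simple_portfolio (V2, n2, h2) \<longrightarrow>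
     (\<forall>S\<in>T. wealth_inf V1 n1 h1 S = wealth_inf V2 n2 h2 S) \<longrightarrow> V1 = V2)"

text \<open>(K): for \<open>f = \<Pi>^{V,n,H}_\<infinity> \<in> E\<close> we have \<open>I(f) = V\<close>.\<close>
definition cond_K :: "traj set \<Rightarrow> bool" where
  "cond_K T \<longleftrightarrow> (\<forall>V n h. simple_portfolio (V, n, h) \<longrightarrow>
     ereal V + barI T (\<lambda>S. ereal (max (- wealth_inf V n h S) 0))
       \<le> barI T (\<lambda>S. ereal (max (wealth_inf V n h S) 0)))"

definition cond_space :: "traj set \<Rightarrow> traj \<Rightarrow> nat \<Rightarrow> traj set" where
  "cond_space T S j = {S' \<in> T. \<forall>k\<le>j. S' k = S k}"

definition shifted_cond_space :: "traj set \<Rightarrow> traj \<Rightarrow> nat \<Rightarrow> traj set" where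
  "shifted_cond_space T S j = (\<lambda>S' i. S' (j + i)) ` cond_space T S j"

end

theory Submission
  imports Defs
begin

(* Restarting a generalized portfolio at a node (S, j) gives a generalized portfolio on the
   shifted conditional space whose endowment is its wealth at time j. Hence (nL) at every node
   forces the wealth of a generalized portfolio superhedging 0 to stay nonnegative at all times;
   in particular positive simple portfolios are nonnegative at all times. (LOP) is barsigma(0) >= 0
   applied to the difference of two portfolios with equal terminal wealth.

   For (K), let a positive generalized portfolio superhedge f^+, where f = Pi^{V,n,H}_infinity.
   Adding the short position -f gives a generalized portfolio superhedging f^- whose wealth stays
   nonnegative, hence at least e after adding cash e > 0. Such a portfolio is replicated at the
   same cost by countably many positive simple portfolios: at each step the total position is
   split in proportion to their current wealth, which keeps each of them positive because the
   total stays >= e. If the positions are not absolutely summable, positivity of the components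
   forces all price moves at that node to have the same sign, and keeping only the profitable part
   of each position leaves the wealth unchanged or makes it infinite. Letting e -> 0 gives
   I(f) + barI(f^-) <= barI(f^+). *)

section \<open>Wealth of simple portfolios\<close>

definition stopped :: "nat \<Rightarrow> strategy \<Rightarrow> strategy" where
  "stopped n h = (\<lambda>i xs. if i < n then h i xs else 0)"

lemma Hval_stopped: "Hval (stopped n h) i S = (if i < n then Hval h i S else 0)"
  by (simp add: Hval_def stopped_def)

lemma sum_lessThan_if_less:
  fixes F :: "nat \<Rightarrow> 'a::comm_monoid_add"
  shows "(\<Sum>i<j. if i < n then F i else 0) = (\<Sum>i<min j n. F i)"
  by (induction j) (auto simp: min_def)

lemma wealth_stopped_strategy:
  "wealth V n h j S = V + (\<Sum>i<j. Hval (stopped n h) i S * (S (Suc i) - S i))"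
proof -
  have "(\<Sum>i<j. Hval (stopped n h) i S * (S (Suc i) - S i))
      = (\<Sum>i<j. if i < n then Hval h i S * (S (Suc i) - S i) else 0)"
    by (intro sum.cong) (auto simp: Hval_stopped)
  then show ?thesis
    by (simp add: wealth_def sum_lessThan_if_less)
qed

lemma wealth_0 [simp]: "wealth V n h 0 S = V"
  by (simp add: wealth_def)

lemma wealth_Suc:
  "wealth V n h (Suc j) S = wealth V n h j S + Hval (stopped n h) j S * (S (Suc j) - S j)"
  by (simp add: wealth_stopped_strategy)

lemma wealth_add:
  "wealth V n h (j + k) S
     = wealth V n h j S + (\<Sum>i<k. Hval (stopped n h) (j + i) S * (S (Suc (j + i)) - S (j + i)))"
  by (induction k) (simp_all add: wealth_Suc)

lemma wealth_eq_wealth_inf: "n \<le> j \<Longrightarrow> wealth V n h j S = wealth_inf V n h S"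
  by (simp add: wealth_def wealth_inf_def min_def)

lemma wealth_stopped: "wealth V n (stopped n' h) j S = wealth V n' h (min j n) S"
proof -
  have "(\<Sum>i<j. Hval (stopped n (stopped n' h)) i S * (S (Suc i) - S i))
      = (\<Sum>i<j. if i < n then Hval (stopped n' h) i S * (S (Suc i) - S i) else 0)"
    by (intro sum.cong) (auto simp: Hval_stopped[of n "stopped n' h"])
  then show ?thesis
    by (simp add: wealth_stopped_strategy sum_lessThan_if_less)
qed

lemma Hval_cong_prefix: "(\<And>k. k \<le> i \<Longrightarrow> S k = S' k) \<Longrightarrow> Hval h i S = Hval h i S'"
proof -
  assume "\<And>k. k \<le> i \<Longrightarrow> S k = S' k"
  then have "map S [0..<Suc i] = map S' [0..<Suc i]"
    by (auto simp: map_eq_conv simp del: upt_Suc)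
  then show ?thesis unfolding Hval_def by (rule arg_cong)
qed

lemma wealth_cong_prefix: "(\<And>k. k \<le> j \<Longrightarrow> S k = S' k) \<Longrightarrow> wealth V n h j S = wealth V n h j S'"
  unfolding wealth_stopped_strategy
  by (intro arg_cong[where f = "\<lambda>x. V + x"] sum.cong refl) (auto intro: Hval_cong_prefix)

definition no_trade :: strategy where
  "no_trade = (\<lambda>_ _. 0)"

lemma wealth_no_trade [simp]: "wealth V n no_trade j S = V"
  by (simp add: wealth_def Hval_def no_trade_def)

lemma wealth_inf_no_trade [simp]: "wealth_inf V n no_trade S = V"
  by (simp add: wealth_inf_def)

definition add_strategy :: "nat \<Rightarrow> strategy \<Rightarrow> nat \<Rightarrow> strategy \<Rightarrow> strategy" where
  "add_strategy n1 h1 n2 h2 = (\<lambda>i xs. stopped n1 h1 i xs + stopped n2 h2 i xs)"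

definition neg_strategy :: "strategy \<Rightarrow> strategy" where
  "neg_strategy h = (\<lambda>i xs. - h i xs)"

lemma wealth_inf_add_strategy:
  "wealth_inf (V1 + V2) (max n1 n2) (add_strategy n1 h1 n2 h2) S
     = wealth_inf V1 n1 h1 S + wealth_inf V2 n2 h2 S"
proof -
  have "Hval (stopped (max n1 n2) (add_strategy n1 h1 n2 h2)) i S
      = Hval (stopped n1 h1) i S + Hval (stopped n2 h2) i S" for i
    by (simp add: Hval_def stopped_def add_strategy_def less_max_iff_disj)
  then have "wealth (V1 + V2) (max n1 n2) (add_strategy n1 h1 n2 h2) j S
      = wealth V1 n1 h1 j S + wealth V2 n2 h2 j S" for j
    by (simp add: wealth_stopped_strategy distrib_right sum.distrib)
  then show ?thesis
    unfolding wealth_inf_def[of "V1 + V2"] by (simp add: wealth_eq_wealth_inf)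
qed

lemma wealth_neg_strategy: "wealth (- V) n (neg_strategy h) j S = - wealth V n h j S"
  by (simp add: wealth_def Hval_def neg_strategy_def sum_negf)

lemma wealth_inf_neg_strategy: "wealth_inf (- V) n (neg_strategy h) S = - wealth_inf V n h S"
  by (simp add: wealth_inf_def wealth_neg_strategy)

lemma wealth_inf_diff_strategy:
  "wealth_inf (V1 - V2) (max n1 n2) (add_strategy n1 h1 n2 (neg_strategy h2)) S
     = wealth_inf V1 n1 h1 S - wealth_inf V2 n2 h2 S"
  using wealth_inf_add_strategy[of V1 "- V2" n1 n2 h1 "neg_strategy h2" S]
  by (simp add: wealth_inf_neg_strategy)

(* The portfolio (V, n, h) restarted at the node (S, j): on the shifted path it sees only the
   history from time j on, so the part S_0, ..., S_(j-1) of the node is prepended. *)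
definition continuation :: "nat \<Rightarrow> strategy \<Rightarrow> nat \<Rightarrow> traj \<Rightarrow> strategy" where
  "continuation n h j S = (\<lambda>i xs. stopped n h (j + i) (map S [0..<j] @ xs))"

lemma Hval_continuation:
  assumes "\<And>k. k \<le> j \<Longrightarrow> S' k = S k"
  shows "Hval (continuation n h j S) i (\<lambda>i. S' (j + i)) = Hval (stopped n h) (j + i) S'"
proof -
  have prefix: "map S [0..<j] = map S' [0..<j]"
    using assms by (simp add: map_eq_conv)
  have split: "map S' [0..<Suc (j + i)] = map S' [0..<j] @ map (\<lambda>i. S' (j + i)) [0..<Suc i]"
  proof -
    have "[0..<Suc (j + i)] = [0..<j] @ map (\<lambda>k. k + j) [0..<Suc i]"
      using upt_add_eq_append[of 0 j "Suc i"] by (simp add: map_add_upt add.commute del: upt_Suc)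
    then show ?thesis by (simp add: add.commute del: upt_Suc)
  qed
  show ?thesis
    by (simp only: Hval_def continuation_def prefix split)
qed

lemma stopped_continuation: "stopped n (continuation n h j S) = continuation n h j S"
  by (auto simp: stopped_def continuation_def fun_eq_iff)

lemma wealth_inf_continuation:
  assumes "\<And>k. k \<le> j \<Longrightarrow> S' k = S k"
  shows "wealth_inf (wealth V n h j S) n (continuation n h j S) (\<lambda>i. S' (j + i)) = wealth_inf V n h S'"
proof -
  have "wealth_inf (wealth V n h j S) n (continuation n h j S) (\<lambda>i. S' (j + i))
      = wealth V n h j S' + (\<Sum>i<n. Hval (stopped n h) (j + i) S' * (S' (Suc (j + i)) - S' (j + i)))"
    using assms
    by (simp add: wealth_inf_def wealth_stopped_strategy[of _ n "continuation n h j S"]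
        stopped_continuation Hval_continuation wealth_cong_prefix[of j S S'])
  also have "\<dots> = wealth V n h (j + n) S'"
    by (simp add: wealth_add)
  finally show ?thesis
    by (simp add: wealth_eq_wealth_inf)
qed

section \<open>Conditional spaces and condition (nL)\<close>

lemma mem_shifted_cond_space_iff:
  "S' \<in> shifted_cond_space T S j \<longleftrightarrow> (\<exists>S''\<in>T. (\<forall>k\<le>j. S'' k = S k) \<and> S' = (\<lambda>i. S'' (j + i)))"
  by (auto simp: shifted_cond_space_def cond_space_def)

lemma shift_mem_shifted_cond_space: "S \<in> T \<Longrightarrow> (\<lambda>i. S (j + i)) \<in> shifted_cond_space T S j"
  by (auto simp: mem_shifted_cond_space_iff)

lemma shifted_cond_space_shifted_cond_space:
  assumes S1: "S1 \<in> cond_space T S j"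
  shows "shifted_cond_space (shifted_cond_space T S j) (\<lambda>i. S1 (j + i)) k
       = shifted_cond_space T S1 (j + k)"
proof -
  have agree: "(\<forall>i\<le>k. S2 (j + i) = S1 (j + i)) \<longleftrightarrow> (\<forall>i\<le>j + k. S2 i = S1 i)"
    if "S2 \<in> cond_space T S j" for S2
  proof safe
    fix i assume "\<forall>i\<le>k. S2 (j + i) = S1 (j + i)" "i \<le> j + k"
    then show "S2 i = S1 i"
      using that S1 by (cases "i \<le> j") (auto simp: cond_space_def dest: spec[of _ "i - j"])
  qed simp
  have "cond_space T S1 (j + k) \<subseteq> cond_space T S j"
    using S1 by (auto simp: cond_space_def)
  then have "cond_space (shifted_cond_space T S j) (\<lambda>i. S1 (j + i)) k
      = (\<lambda>S' i. S' (j + i)) ` cond_space T S1 (j + k)"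
    using agree unfolding shifted_cond_space_def by (auto simp: cond_space_def)
  then show ?thesis
    by (simp add: shifted_cond_space_def image_image add.assoc)
qed

definition cond_nL :: "traj set \<Rightarrow> bool" where
  "cond_nL T \<longleftrightarrow> (\<forall>S\<in>T. \<forall>j. 0 \<le> barsigma (shifted_cond_space T S j) (\<lambda>_. 0))"

lemma cond_nL_shifted_cond_space:
  assumes "cond_nL T" and "S \<in> T"
  shows "cond_nL (shifted_cond_space T S j)"
  unfolding cond_nL_def
proof (intro ballI allI)
  fix S' k assume "S' \<in> shifted_cond_space T S j"
  then obtain S1 where "S1 \<in> cond_space T S j" and "S' = (\<lambda>i. S1 (j + i))"
    by (auto simp: shifted_cond_space_def)
  then show "0 \<le> barsigma (shifted_cond_space (shifted_cond_space T S j) S' k) (\<lambda>_. 0)"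
    using assms(1) by (simp add: shifted_cond_space_shifted_cond_space cond_nL_def cond_space_def)
qed

lemma positive_simple_continuation:
  assumes "1 \<le> n" and pos: "\<And>S' j. S' \<in> U \<Longrightarrow> 0 \<le> wealth V n h j S'" and "S \<in> U"
  shows "positive_simple (shifted_cond_space U S j) (wealth V n h j S, n, continuation n h j S)"
  unfolding positive_simple_def simple_portfolio_def
proof (intro conjI ballI)
  fix S' assume "S' \<in> shifted_cond_space U S j"
  then obtain S'' where "S'' \<in> U" "\<forall>k\<le>j. S'' k = S k" "S' = (\<lambda>i. S'' (j + i))"
    by (auto simp: mem_shifted_cond_space_iff)
  then have "wealth_inf (wealth V n h j S) n (continuation n h j S) S' = wealth_inf V n h S''"
    by (simp add: wealth_inf_continuation)
  then show "0 \<le> wealth_inf (fst (wealth V n h j S, n, continuation n h j S))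
      (fst (snd (wealth V n h j S, n, continuation n h j S)))
      (snd (snd (wealth V n h j S, n, continuation n h j S))) S'"
    using pos \<open>S'' \<in> U\<close> by (simp add: wealth_inf_def)
qed (use assms in simp_all)

lemma intermediate_wealth_nonneg:
  assumes nL: "cond_nL U" and "1 \<le> n" and "\<And>m. 1 \<le> nm m"
    and pos: "\<And>m S j. S \<in> U \<Longrightarrow> 0 \<le> wealth (Vm m) (nm m) (hm m) j S"
    and terminal: "\<And>S. S \<in> U \<Longrightarrow>
      0 \<le> ereal (wealth_inf V n h S) + (\<Sum>m. ereal (wealth_inf (Vm m) (nm m) (hm m) S))"
    and "S \<in> U"
  shows "0 \<le> ereal (wealth V n h j S) + (\<Sum>m. ereal (wealth (Vm m) (nm m) (hm m) j S))"
proof -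
  define U' where "U' = shifted_cond_space U S j"
  define P :: "nat \<Rightarrow> simple_pf" where
    "P m = (case m of 0 \<Rightarrow> (wealth V n h j S, n, continuation n h j S)
       | Suc k \<Rightarrow> (wealth (Vm k) (nm k) (hm k) j S, nm k, continuation (nm k) (hm k) j S))" for m
  have "gen_portfolio U' P"
    unfolding gen_portfolio_def
  proof (intro conjI allI impI)
    show "simple_portfolio (P 0)"
      using \<open>1 \<le> n\<close> by (simp add: P_def simple_portfolio_def)
    fix m :: nat assume "1 \<le> m"
    then show "positive_simple U' (P m)"
      using positive_simple_continuation[OF assms(3) pos \<open>S \<in> U\<close>]
      by (cases m) (simp_all add: P_def U'_def)
  qed
  moreover have "superhedges U' (\<lambda>_. 0) P"
    unfolding superhedges_def
  proof
    fix S' assume "S' \<in> U'"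
    then obtain S'' where "S'' \<in> U" "\<forall>k\<le>j. S'' k = S k" "S' = (\<lambda>i. S'' (j + i))"
      by (auto simp: U'_def mem_shifted_cond_space_iff)
    then show "0 \<le> gen_wealth P S'"
      using terminal by (simp add: gen_wealth_def P_def wealth_inf_continuation)
  qed
  ultimately have "barsigma U' (\<lambda>_. 0) \<le> endowment P"
    unfolding barsigma_def by (intro Inf_lower) blast
  moreover have "0 \<le> barsigma U' (\<lambda>_. 0)"
    using nL \<open>S \<in> U\<close> by (simp add: cond_nL_def U'_def)
  ultimately show ?thesis
    by (simp add: endowment_def P_def)
qed

lemma positive_simple_wealth_nonneg:
  assumes "cond_nL U" and "positive_simple U (V, n, h)" and "S \<in> U"
  shows "0 \<le> wealth V n h j S"
proof -
  have "0 \<le> ereal (wealth V n h j S) + (\<Sum>m. ereal (wealth 0 1 no_trade j S))"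
    using assms
    by (intro intermediate_wealth_nonneg[where nm = "\<lambda>_. 1"])
       (simp_all add: positive_simple_def simple_portfolio_def zero_ereal_def[symmetric])
  then show ?thesis
    by (simp add: zero_ereal_def[symmetric])
qed

lemma intermediate_wealth_nonneg_positive:
  assumes "cond_nL U" and "1 \<le> n"
    and pos: "\<And>m. positive_simple U (Vm m, nm m, hm m)"
    and "\<And>S. S \<in> U \<Longrightarrow>
      0 \<le> ereal (wealth_inf V n h S) + (\<Sum>m. ereal (wealth_inf (Vm m) (nm m) (hm m) S))"
    and "S \<in> U"
  shows "0 \<le> ereal (wealth V n h j S) + (\<Sum>m. ereal (wealth (Vm m) (nm m) (hm m) j S))"
  using assms positive_simple_wealth_nonneg[OF \<open>cond_nL U\<close> pos]
  by (intro intermediate_wealth_nonneg) (auto simp: positive_simple_def simple_portfolio_def)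

lemma LOP_if_barsigma_nonneg:
  assumes nonneg: "0 \<le> barsigma U (\<lambda>_. 0)"
  shows "LOP U"
proof -
  have "V2 \<le> V1" if "1 \<le> n1" and eq: "\<forall>S\<in>U. wealth_inf V1 n1 h1 S = wealth_inf V2 n2 h2 S"
    for V1 n1 h1 V2 n2 h2
  proof -
    define P :: "nat \<Rightarrow> simple_pf" where
      "P m = (if m = 0 then (V1 - V2, max n1 n2, add_strategy n1 h1 n2 (neg_strategy h2))
        else (0, 1, no_trade))" for m
    have "gen_portfolio U P"
      using \<open>1 \<le> n1\<close> by (simp add: gen_portfolio_def P_def positive_simple_def simple_portfolio_def)
    moreover have "superhedges U (\<lambda>_. 0) P"
      using eq by (simp add: superhedges_def gen_wealth_def P_def wealth_inf_diff_strategy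
          zero_ereal_def[symmetric])
    ultimately have "barsigma U (\<lambda>_. 0) \<le> endowment P"
      unfolding barsigma_def by (intro Inf_lower) blast
    also have "endowment P = ereal (V1 - V2)"
      by (simp add: endowment_def P_def zero_ereal_def[symmetric])
    finally show ?thesis
      using order_trans[OF nonneg] by fastforce
  qed
  then show ?thesis
    unfolding LOP_def simple_portfolio_def by (metis fst_conv snd_conv order_antisym)
qed

section \<open>Replication by positive simple portfolios\<close>

lemma one_sided_position_bound:
  fixes p g y t :: real
  assumes "0 \<le> p" and "0 \<le> p + g * y"
    and "(0 \<le> y \<and> t = max g 0) \<or> (y \<le> 0 \<and> t = min g 0)"
  shows "0 \<le> t * y" and "\<bar>g\<bar> * \<bar>y\<bar> \<le> t * y + p"
  using assms by (auto simp: abs_if max_def min_def mult_le_0_iff zero_le_mult_iff split: if_splits)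

lemma abs_le_of_two_sided_step_bounds:
  fixes p g y1 y2 :: real
  assumes "0 \<le> p" and "y1 < 0" and "0 < y2"
    and "0 \<le> p + g * y1" and "0 \<le> p + g * y2"
  shows "\<bar>g\<bar> \<le> p * (1 / y2 - 1 / y1)"
proof -
  have "g \<le> p / - y1" and "- g \<le> p / y2"
    using assms by (simp_all add: field_simps)
  moreover have "0 \<le> p / - y1" and "0 \<le> p / y2"
    using assms by (intro divide_nonneg_pos; simp)+
  moreover have "p * (1 / y2 - 1 / y1) = p / y2 + p / - y1"
    by (simp add: right_diff_distrib)
  ultimately show ?thesis
    by (simp add: abs_le_iff)
qed

lemma suminf_ereal_not_summable:
  "(\<And>i. 0 \<le> f i) \<Longrightarrow> \<not> summable f \<Longrightarrow> (\<Sum>i. ereal (f i)) = \<infinity>"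
  using summable_ereal by blast

lemma barI_le_suminf_endowments:
  assumes pos: "\<And>m. positive_simple U (Q m)"
    and hedge: "\<And>S. S \<in> U \<Longrightarrow>
      f S \<le> (\<Sum>m. ereal (wealth_inf (fst (Q m)) (fst (snd (Q m))) (snd (snd (Q m))) S))"
  shows "barI U f \<le> (\<Sum>m. ereal (fst (Q m)))"
proof -
  define P where "P = case_nat (0, 1, no_trade) Q"
  have "pos_gen_portfolio U P"
    using pos by (auto simp: pos_gen_portfolio_def gen_portfolio_def P_def simple_portfolio_def
        split: nat.split)
  moreover have "superhedges U f P"
    using hedge by (simp add: superhedges_def gen_wealth_def P_def)
  ultimately have "barI U f \<le> endowment P"
    unfolding barI_def by (intro Inf_lower) blast
  then show ?thesis
    by (simp add: endowment_def P_def)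
qed

(* A strategy only sees the history list; rep_strategy below rebuilds a trajectory from it,
   padded with junk zeros, which is harmless because rep_position at time i only depends on
   S_0, ..., S_i. *)
definition traj_of_list :: "real list \<Rightarrow> traj" where
  "traj_of_list xs k = (if k < length xs then xs ! k else 0)"

lemma traj_of_list_map: "k \<le> i \<Longrightarrow> traj_of_list (map S [0..<Suc i]) k = S k"
  by (simp add: traj_of_list_def del: upt_Suc)

locale positive_replication =
  fixes U :: "traj set" and N :: nat and a0 :: real and h0 :: strategy
    and Vm :: "nat \<Rightarrow> real" and hm :: "nat \<Rightarrow> strategy" and \<kappa> :: real
  assumes horizon_pos: "1 \<le> N" and kappa_pos: "0 < \<kappa>"
    and Vm_nonneg: "\<And>m. 0 \<le> Vm m" and summable_Vm: "summable Vm"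
    and suminf_Vm_pos: "0 < suminf Vm"
    and kappa_le_endowment: "\<kappa> \<le> a0 + suminf Vm"
    and pf_wealth_nonneg: "\<And>m S j. S \<in> U \<Longrightarrow> 0 \<le> wealth (Vm m) N (hm m) j S"
    and kappa_le_total_wealth: "\<And>S j. S \<in> U \<Longrightarrow> j \<le> N \<Longrightarrow>
      ereal \<kappa> \<le> ereal (wealth a0 N h0 j S) + (\<Sum>m. ereal (wealth (Vm m) N (hm m) j S))"
begin

abbreviation pf_wealth :: "nat \<Rightarrow> nat \<Rightarrow> traj \<Rightarrow> real" where
  "pf_wealth m j S \<equiv> wealth (Vm m) N (hm m) j S"

abbreviation pf_position :: "nat \<Rightarrow> nat \<Rightarrow> traj \<Rightarrow> real" where
  "pf_position m j S \<equiv> Hval (stopped N (hm m)) j S"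

abbreviation base_wealth :: "nat \<Rightarrow> traj \<Rightarrow> real" where
  "base_wealth j S \<equiv> wealth a0 N h0 j S"

abbreviation base_position :: "nat \<Rightarrow> traj \<Rightarrow> real" where
  "base_position j S \<equiv> Hval (stopped N h0) j S"

definition increments :: "nat \<Rightarrow> traj \<Rightarrow> real set" where
  "increments j S = {S' (Suc j) - S j | S'. S' \<in> U \<and> (\<forall>k\<le>j. S' k = S k)}"

definition q_init :: "nat \<Rightarrow> real" where
  "q_init m = Vm m * ((a0 + suminf Vm) / suminf Vm)"

(* q is the current wealth of the replicating portfolios. Once it is not summable their total
   value is infinite and they stop trading. *)
definition rep_position :: "(nat \<Rightarrow> real) \<Rightarrow> nat \<Rightarrow> traj \<Rightarrow> nat \<Rightarrow> real" where
  "rep_position q j S m =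
     (if \<not> summable q then 0
      else if summable (\<lambda>m. \<bar>pf_position m j S\<bar>)
        then q m * (((\<Sum>m. pf_position m j S) + base_position j S) / suminf q)
      else if \<forall>y\<in>increments j S. 0 \<le> y then max (pf_position m j S) 0
      else min (pf_position m j S) 0)"

primrec rep_wealth :: "nat \<Rightarrow> traj \<Rightarrow> nat \<Rightarrow> real" where
  "rep_wealth 0 S = q_init"
| "rep_wealth (Suc j) S =
     (\<lambda>m. rep_wealth j S m + rep_position (rep_wealth j S) j S m * (S (Suc j) - S j))"

definition rep_strategy :: "nat \<Rightarrow> strategy" where
  "rep_strategy m = (\<lambda>i xs. rep_position (rep_wealth i (traj_of_list xs)) i (traj_of_list xs) m)"

lemma rep_position_cong_prefix:
  assumes "\<And>k. k \<le> j \<Longrightarrow> S k = S' k"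
  shows "rep_position q j S m = rep_position q j S' m"
proof -
  have "increments j S = increments j S'"
    using assms by (auto simp: increments_def)
  with assms show ?thesis
    unfolding rep_position_def by (simp add: Hval_cong_prefix[of j S S'])
qed

lemma rep_wealth_cong_prefix: "(\<And>k. k \<le> j \<Longrightarrow> S k = S' k) \<Longrightarrow> rep_wealth j S = rep_wealth j S'"
proof (induction j)
  case (Suc j)
  then show ?case
    using rep_position_cong_prefix[of j S S'] by simp
qed simp

lemma Hval_rep_strategy: "Hval (rep_strategy m) i S = rep_position (rep_wealth i S) i S m"
  using rep_wealth_cong_prefix[of i "traj_of_list (map S [0..<Suc i])" S]
    rep_position_cong_prefix[of i "traj_of_list (map S [0..<Suc i])" S]
  by (simp add: Hval_def rep_strategy_def traj_of_list_map del: upt_Suc)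

lemma wealth_rep_strategy: "j \<le> N \<Longrightarrow> wealth (q_init m) N (rep_strategy m) j S = rep_wealth j S m"
  by (induction j) (simp_all add: wealth_Suc Hval_stopped Hval_rep_strategy)

lemma increment_mem_increments: "S \<in> U \<Longrightarrow> S (Suc j) - S j \<in> increments j S"
  unfolding increments_def by blast

lemma pf_wealth_step_nonneg:
  assumes "S \<in> U" and "y \<in> increments j S"
  shows "0 \<le> pf_wealth m j S + pf_position m j S * y"
proof -
  obtain S' where S': "S' \<in> U" "\<forall>k\<le>j. S' k = S k" and y: "y = S' (Suc j) - S j"
    using assms(2) unfolding increments_def by blast
  have "0 \<le> pf_wealth m (Suc j) S'"
    using S'(1) by (rule pf_wealth_nonneg)
  also have "\<dots> = pf_wealth m j S + pf_position m j S * y"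
    using S'(2) y by (simp add: wealth_Suc wealth_cong_prefix[of j S' S] Hval_cong_prefix[of j S' S])
  finally show ?thesis .
qed

lemma kappa_le_total_wealth_real:
  assumes "S \<in> U" "j \<le> N" "summable (\<lambda>m. pf_wealth m j S)"
  shows "\<kappa> \<le> base_wealth j S + (\<Sum>m. pf_wealth m j S)"
  using kappa_le_total_wealth[OF assms(1,2)] by (simp add: suminf_ereal'[OF assms(3)])

lemma summable_q_init: "summable q_init"
  unfolding q_init_def using summable_Vm by (rule summable_mult2)

lemma suminf_q_init: "suminf q_init = a0 + suminf Vm"
proof -
  have "suminf q_init = suminf Vm * ((a0 + suminf Vm) / suminf Vm)"
    unfolding q_init_def by (rule suminf_mult2[OF summable_Vm, symmetric])
  then show ?thesis
    using suminf_Vm_pos by simp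
qed

definition rep_invariant :: "nat \<Rightarrow> traj \<Rightarrow> bool" where
  "rep_invariant j S \<longleftrightarrow> (\<forall>m. 0 \<le> rep_wealth j S m) \<and>
     (summable (rep_wealth j S) \<longrightarrow> summable (\<lambda>m. pf_wealth m j S) \<and>
        suminf (rep_wealth j S) = base_wealth j S + (\<Sum>m. pf_wealth m j S))"

lemma rep_invariant_0: "rep_invariant 0 S"
proof -
  have "0 \<le> q_init m" for m
    using Vm_nonneg[of m] kappa_pos kappa_le_endowment suminf_Vm_pos by (simp add: q_init_def)
  then show ?thesis
    by (simp add: rep_invariant_def summable_Vm suminf_q_init)
qed

lemma rep_invariant_Suc_proportional:
  assumes S: "S \<in> U" and "j < N" and inv: "rep_invariant j S"
    and sq: "summable (rep_wealth j S)" and sg: "summable (\<lambda>m. \<bar>pf_position m j S\<bar>)"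
  shows "rep_invariant (Suc j) S"
proof -
  let ?q = "rep_wealth j S" and ?y = "S (Suc j) - S j"
  define G where "G = (\<Sum>m. pf_position m j S) + base_position j S"
  define \<tau> where "\<tau> = G / suminf ?q"
  from inv sq have nonneg: "\<And>m. 0 \<le> ?q m" and sp: "summable (\<lambda>m. pf_wealth m j S)"
    and eq: "suminf ?q = base_wealth j S + (\<Sum>m. pf_wealth m j S)"
    by (auto simp: rep_invariant_def)
  have sg': "summable (\<lambda>m. pf_position m j S)"
    using sg by (rule summable_rabs_cancel)
  have q': "rep_wealth (Suc j) S = (\<lambda>m. ?q m * (1 + \<tau> * ?y))"
    by (simp add: rep_position_def sq sg \<tau>_def G_def algebra_simps)
  have p': "(\<lambda>m. pf_wealth m (Suc j) S) = (\<lambda>m. pf_wealth m j S + pf_position m j S * ?y)"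
    by (simp add: wealth_Suc)
  have sp': "summable (\<lambda>m. pf_wealth m (Suc j) S)"
    unfolding p' by (intro summable_add sp summable_mult2 sg')
  have "base_wealth (Suc j) S + (\<Sum>m. pf_wealth m (Suc j) S) = suminf ?q + G * ?y"
    unfolding p' suminf_add[OF sp summable_mult2[OF sg'], symmetric] suminf_mult2[OF sg', symmetric]
    by (simp add: eq wealth_Suc G_def algebra_simps)
  moreover have "\<kappa> \<le> base_wealth (Suc j) S + (\<Sum>m. pf_wealth m (Suc j) S)"
    using kappa_le_total_wealth_real[OF S _ sp'] \<open>j < N\<close> by simp
  moreover have q_pos: "0 < suminf ?q"
    using kappa_le_total_wealth_real[OF S _ sp] \<open>j < N\<close> kappa_pos eq by simp
  then have "suminf ?q * (1 + \<tau> * ?y) = suminf ?q + G * ?y"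
    by (simp add: \<tau>_def field_simps)
  moreover have "suminf (rep_wealth (Suc j) S) = suminf ?q * (1 + \<tau> * ?y)"
    unfolding q' by (rule suminf_mult2[OF sq, symmetric])
  ultimately have "suminf (rep_wealth (Suc j) S) = base_wealth (Suc j) S + (\<Sum>m. pf_wealth m (Suc j) S)"
    and "0 < suminf ?q * (1 + \<tau> * ?y)"
    using kappa_pos by simp_all
  moreover have "0 \<le> rep_wealth (Suc j) S m" if "0 < 1 + \<tau> * ?y" for m
    using nonneg[of m] that unfolding q' by simp
  ultimately show ?thesis
    using q_pos sp' by (simp add: rep_invariant_def zero_less_mult_iff)
qed

lemma increments_one_sided:
  assumes S: "S \<in> U" and sp: "summable (\<lambda>m. pf_wealth m j S)"
    and nsg: "\<not> summable (\<lambda>m. \<bar>pf_position m j S\<bar>)"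
  shows "(\<forall>y\<in>increments j S. 0 \<le> y) \<or> (\<forall>y\<in>increments j S. y \<le> 0)"
proof (rule ccontr)
  assume "\<not> ?thesis"
  then obtain y1 y2 where y1: "y1 \<in> increments j S" "y1 < 0" and y2: "y2 \<in> increments j S" "0 < y2"
    by (auto simp: not_le)
  have "\<bar>pf_position m j S\<bar> \<le> pf_wealth m j S * (1 / y2 - 1 / y1)" for m
    using pf_wealth_nonneg[OF S] y1 y2 pf_wealth_step_nonneg[OF S]
    by (intro abs_le_of_two_sided_step_bounds) auto
  then have "summable (\<lambda>m. \<bar>pf_position m j S\<bar>)"
    by (intro summable_comparison_test'[OF summable_mult2[OF sp]]) auto
  with nsg show False ..
qed

lemma rep_position_one_sided:
  assumes S: "S \<in> U" and "summable q" and sp: "summable (\<lambda>m. pf_wealth m j S)"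
    and nsg: "\<not> summable (\<lambda>m. \<bar>pf_position m j S\<bar>)"
  shows "(0 \<le> S (Suc j) - S j \<and> rep_position q j S m = max (pf_position m j S) 0)
    \<or> (S (Suc j) - S j \<le> 0 \<and> rep_position q j S m = min (pf_position m j S) 0)"
proof (cases "\<forall>y\<in>increments j S. 0 \<le> y")
  case True
  moreover have "0 \<le> S (Suc j) - S j"
    using True increment_mem_increments[OF S, of j] by blast
  ultimately show ?thesis
    by (simp add: rep_position_def \<open>summable q\<close> nsg)
next
  case False
  then have "\<forall>y\<in>increments j S. y \<le> 0"
    using increments_one_sided[OF S sp nsg] by blast
  then have "S (Suc j) - S j \<le> 0"
    using increment_mem_increments[OF S, of j] by blast
  then show ?thesis
    by (simp add: rep_position_def \<open>summable q\<close> nsg False)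
qed

lemma rep_invariant_Suc_one_sided:
  assumes S: "S \<in> U" and inv: "rep_invariant j S"
    and sq: "summable (rep_wealth j S)" and nsg: "\<not> summable (\<lambda>m. \<bar>pf_position m j S\<bar>)"
  shows "rep_invariant (Suc j) S"
proof -
  let ?q = "rep_wealth j S" and ?y = "S (Suc j) - S j"
  define t where "t m = rep_position ?q j S m" for m
  from inv sq have nonneg: "\<And>m. 0 \<le> ?q m" and sp: "summable (\<lambda>m. pf_wealth m j S)"
    by (auto simp: rep_invariant_def)
  have "(0 \<le> ?y \<and> t m = max (pf_position m j S) 0) \<or> (?y \<le> 0 \<and> t m = min (pf_position m j S) 0)" for m
    using rep_position_one_sided[OF S sq sp nsg] by (simp add: t_def)
  then have step: "0 \<le> t m * ?y" and bound: "\<bar>pf_position m j S\<bar> * \<bar>?y\<bar> \<le> t m * ?y + pf_wealth m j S" for m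
    using one_sided_position_bound pf_wealth_nonneg[OF S]
      pf_wealth_step_nonneg[OF S increment_mem_increments[OF S]] by blast+
  have q': "rep_wealth (Suc j) S = (\<lambda>m. ?q m + t m * ?y)"
    by (simp add: t_def)
  have nonneg': "0 \<le> rep_wealth (Suc j) S m" for m
    using nonneg[of m] step[of m] unfolding q' by simp
  show ?thesis
  proof (cases "?y = 0")
    case True
    then show ?thesis
      using inv unfolding q' by (simp add: rep_invariant_def wealth_Suc)
  next
    case False
    have "\<not> summable (rep_wealth (Suc j) S)"
    proof
      assume "summable (rep_wealth (Suc j) S)"
      then have majorant: "summable (\<lambda>m. (rep_wealth (Suc j) S m + pf_wealth m j S) / \<bar>?y\<bar>)"
        using sp by (intro summable_divide summable_add)
      have "\<bar>pf_position m j S\<bar> \<le> (rep_wealth (Suc j) S m + pf_wealth m j S) / \<bar>?y\<bar>" for m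
        using bound[of m] nonneg[of m] False unfolding q' by (simp add: pos_le_divide_eq)
      then have "summable (\<lambda>m. \<bar>pf_position m j S\<bar>)"
        by (intro summable_comparison_test'[OF majorant]) auto
      with nsg show False ..
    qed
    then show ?thesis
      using nonneg' by (simp add: rep_invariant_def)
  qed
qed

lemma rep_invariant_Suc:
  assumes "S \<in> U" and "j < N" and inv: "rep_invariant j S"
  shows "rep_invariant (Suc j) S"
proof (cases "summable (rep_wealth j S)")
  case False
  with inv show ?thesis
    by (simp add: rep_invariant_def rep_position_def)
next
  case True
  then show ?thesis
    using assms rep_invariant_Suc_proportional rep_invariant_Suc_one_sided by blast
qed

lemma rep_invariant: "S \<in> U \<Longrightarrow> j \<le> N \<Longrightarrow> rep_invariant j S"
  by (induction j) (simp_all add: rep_invariant_0 rep_invariant_Suc)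

lemma total_wealth_le_rep_wealth:
  assumes "S \<in> U"
  shows "ereal (wealth_inf a0 N h0 S) + (\<Sum>m. ereal (wealth_inf (Vm m) N (hm m) S))
    \<le> (\<Sum>m. ereal (rep_wealth N S m))"
proof -
  have inv: "rep_invariant N S"
    using assms by (simp add: rep_invariant)
  show ?thesis
  proof (cases "summable (rep_wealth N S)")
    case True
    with inv have "summable (\<lambda>m. pf_wealth m N S)"
      and "suminf (rep_wealth N S) = base_wealth N S + (\<Sum>m. pf_wealth m N S)"
      by (auto simp: rep_invariant_def)
    with True show ?thesis
      by (simp add: suminf_ereal' wealth_inf_def)
  next
    case False
    with inv show ?thesis
      by (simp add: rep_invariant_def suminf_ereal_not_summable)
  qed
qed

lemma barI_le:
  assumes "\<And>S. S \<in> U \<Longrightarrow>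
    f S \<le> ereal (wealth_inf a0 N h0 S) + (\<Sum>m. ereal (wealth_inf (Vm m) N (hm m) S))"
  shows "barI U f \<le> ereal (a0 + suminf Vm)"
proof -
  have wealth_inf_rep: "wealth_inf (q_init m) N (rep_strategy m) S = rep_wealth N S m" for m S
    by (simp add: wealth_inf_def wealth_rep_strategy)
  have "barI U f \<le> (\<Sum>m. ereal (q_init m))"
  proof (rule barI_le_suminf_endowments[where Q = "\<lambda>m. (q_init m, N, rep_strategy m)", simplified])
    show "positive_simple U (q_init m, N, rep_strategy m)" for m
      using rep_invariant_0 rep_invariant[of _ N] horizon_pos
      by (simp add: positive_simple_def simple_portfolio_def rep_invariant_def wealth_inf_rep)
    show "f S \<le> (\<Sum>m. ereal (wealth_inf (q_init m) N (rep_strategy m) S))" if "S \<in> U" for S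
      using assms[OF that] total_wealth_le_rep_wealth[OF that] by (simp add: wealth_inf_rep)
  qed
  then show ?thesis
    by (simp add: suminf_ereal'[OF summable_q_init] suminf_q_init)
qed

end

section \<open>Condition (K)\<close>

lemma sums_case_nat:
  fixes f :: "nat \<Rightarrow> 'a::real_normed_vector"
  shows "f sums s \<Longrightarrow> case_nat a f sums (a + s)"
  using sums_Suc_iff[of "case_nat a f" s] by (simp add: add.commute)

lemma suminf_ereal_split_head:
  assumes "\<And>m. 0 \<le> x m"
  shows "(\<Sum>m. ereal (x m)) = ereal (x 0) + (\<Sum>m. ereal (x (Suc m)))"
proof (cases "summable x")
  case True
  then show ?thesis
    using suminf_split_head[OF True] by (simp add: suminf_ereal' summable_Suc_iff)
next
  case False
  with assms show ?thesis
    by (simp add: suminf_ereal_not_summable summable_Suc_iff)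
qed

lemma suminf_wealth_add_cash:
  assumes "0 \<le> e" and pf_nonneg: "\<And>m j. 0 \<le> wealth (Vm m) (nm m) (hm m) j S"
  shows "(\<Sum>m. ereal (wealth (case_nat e Vm m) n (case_nat no_trade (\<lambda>m. stopped (nm m) (hm m)) m) j S))
    = ereal e + (\<Sum>m. ereal (wealth (Vm m) (nm m) (hm m) (min j n) S))"
proof -
  have "0 \<le> wealth (case_nat e Vm m) n (case_nat no_trade (\<lambda>m. stopped (nm m) (hm m)) m) j S" for m
    using assms by (cases m) (simp_all add: wealth_stopped)
  then show ?thesis
    by (simp add: suminf_ereal_split_head wealth_stopped)
qed

lemma positive_replication_add_cash:
  assumes "U \<noteq> {}" and "1 \<le> n" and "summable Vm" and "0 < e"
    and pf_nonneg: "\<And>m S j. S \<in> U \<Longrightarrow> 0 \<le> wealth (Vm m) (nm m) (hm m) j S"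
    and total_nonneg: "\<And>S j. S \<in> U \<Longrightarrow>
      0 \<le> ereal (wealth V n h j S) + (\<Sum>m. ereal (wealth (Vm m) (nm m) (hm m) j S))"
  shows "positive_replication U n V h (case_nat e Vm) (case_nat no_trade (\<lambda>m. stopped (nm m) (hm m))) e"
proof -
  obtain S0 where "S0 \<in> U"
    using assms(1) by blast
  have Vm_nonneg: "0 \<le> Vm m" for m
    using pf_nonneg[OF \<open>S0 \<in> U\<close>, of m 0] by simp
  have "0 \<le> V + suminf Vm"
    using total_nonneg[OF \<open>S0 \<in> U\<close>, of 0] by (simp add: suminf_ereal' \<open>summable Vm\<close>)
  moreover have "case_nat e Vm sums (e + suminf Vm)"
    using sums_case_nat[OF summable_sums[OF \<open>summable Vm\<close>]] .
  moreover have "0 \<le> suminf Vm"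
    using suminf_nonneg[OF \<open>summable Vm\<close> Vm_nonneg] .
  moreover have "e \<le> ereal (wealth V n h j S)
      + (\<Sum>m. ereal (wealth (case_nat e Vm m) n (case_nat no_trade (\<lambda>m. stopped (nm m) (hm m)) m) j S))"
    if "S \<in> U" and "j \<le> n" for S j
    using total_nonneg[OF that(1), of j] that \<open>0 < e\<close> pf_nonneg
    by (simp add: suminf_wealth_add_cash add.left_commute add_increasing2)
  moreover have "0 \<le> wealth (case_nat e Vm m) n (case_nat no_trade (\<lambda>m. stopped (nm m) (hm m)) m) j S"
    if "S \<in> U" for m S j
    using \<open>0 < e\<close> pf_nonneg[OF that] by (cases m) (simp_all add: wealth_stopped)
  moreover have "0 \<le> case_nat e Vm m" for m
    using \<open>0 < e\<close> Vm_nonneg by (cases m) simp_all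
  ultimately show ?thesis
    using \<open>1 \<le> n\<close> \<open>0 < e\<close> by unfold_locales (auto simp: sums_iff)
qed

lemma ereal_max_le_add:
  fixes A :: ereal and c e :: real
  assumes "0 \<le> A" and "0 \<le> ereal c + A" and "0 \<le> e"
  shows "ereal (max c 0) \<le> ereal c + (ereal e + A)"
  using assms by (cases A) (auto simp: max_def)

lemma barI_pos_part_le:
  assumes "U \<noteq> {}" and "1 \<le> n" and "summable Vm"
    and pf_nonneg: "\<And>m S j. S \<in> U \<Longrightarrow> 0 \<le> wealth (Vm m) (nm m) (hm m) j S"
    and total_nonneg: "\<And>S j. S \<in> U \<Longrightarrow>
      0 \<le> ereal (wealth V n h j S) + (\<Sum>m. ereal (wealth (Vm m) (nm m) (hm m) j S))"
  shows "barI U (\<lambda>S. ereal (max (wealth_inf V n h S) 0)) \<le> ereal (V + suminf Vm)"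
proof (rule ereal_le_epsilon2)
  fix e :: real assume "0 < e"
  let ?Vm = "case_nat e Vm" and ?hm = "case_nat no_trade (\<lambda>m. stopped (nm m) (hm m))"
  interpret positive_replication U n V h ?Vm ?hm e
    using positive_replication_add_cash[OF assms(1-3) \<open>0 < e\<close> pf_nonneg total_nonneg] .
  have "barI U (\<lambda>S. ereal (max (wealth_inf V n h S) 0)) \<le> ereal (V + suminf ?Vm)"
  proof (rule barI_le)
    fix S assume "S \<in> U"
    have "0 \<le> (\<Sum>m. ereal (wealth (Vm m) (nm m) (hm m) n S))"
      using pf_nonneg[OF \<open>S \<in> U\<close>] by (simp add: suminf_0_le)
    then show "ereal (max (wealth_inf V n h S) 0)
        \<le> ereal (wealth_inf V n h S) + (\<Sum>m. ereal (wealth_inf (?Vm m) n (?hm m) S))"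
      using ereal_max_le_add total_nonneg[OF \<open>S \<in> U\<close>, of n] \<open>0 < e\<close> pf_nonneg[OF \<open>S \<in> U\<close>]
      by (simp add: wealth_inf_def suminf_wealth_add_cash)
  qed
  moreover have "suminf ?Vm = e + suminf Vm"
    using sums_case_nat[OF summable_sums[OF \<open>summable Vm\<close>]] by (rule sums_unique[symmetric])
  ultimately show "barI U (\<lambda>S. ereal (max (wealth_inf V n h S) 0)) \<le> ereal (V + suminf Vm) + ereal e"
    by (simp add: add_ac)
qed

lemma pos_gen_portfolio_head:
  assumes "pos_gen_portfolio U P" and "U \<noteq> {}"
  shows "endowment P = (\<Sum>m. ereal (fst (P (Suc m))))"
    and "S \<in> U \<Longrightarrow> gen_wealth P S
      = (\<Sum>m. ereal (wealth_inf (fst (P (Suc m))) (fst (snd (P (Suc m)))) (snd (snd (P (Suc m)))) S))"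
proof -
  have zero: "wealth (fst (P 0)) (fst (snd (P 0))) (snd (snd (P 0))) j S = 0" if "S \<in> U" for j S
    using assms(1) that by (simp add: pos_gen_portfolio_def)
  obtain S0 where "S0 \<in> U"
    using assms(2) by blast
  from zero[OF this, of 0] show "endowment P = (\<Sum>m. ereal (fst (P (Suc m))))"
    by (simp add: endowment_def)
  show "S \<in> U \<Longrightarrow> gen_wealth P S
      = (\<Sum>m. ereal (wealth_inf (fst (P (Suc m))) (fst (snd (P (Suc m)))) (snd (snd (P (Suc m)))) S))"
    using zero by (simp add: gen_wealth_def wealth_inf_def)
qed

lemma short_wealth_plus_hedge_nonneg:
  assumes nL: "cond_nL U" and "1 \<le> n"
    and pos: "\<And>m. positive_simple U (Vm m, nm m, hm m)"
    and hedge: "\<And>S. S \<in> U \<Longrightarrow>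
      ereal (max (wealth_inf V n h S) 0) \<le> (\<Sum>m. ereal (wealth_inf (Vm m) (nm m) (hm m) S))"
    and "S \<in> U"
  shows "0 \<le> ereal (wealth (- V) n (neg_strategy h) j S) + (\<Sum>m. ereal (wealth (Vm m) (nm m) (hm m) j S))"
proof (rule intermediate_wealth_nonneg_positive[OF nL \<open>1 \<le> n\<close> pos _ \<open>S \<in> U\<close>])
  fix S assume "S \<in> U"
  then show "0 \<le> ereal (wealth_inf (- V) n (neg_strategy h) S) + (\<Sum>m. ereal (wealth_inf (Vm m) (nm m) (hm m) S))"
    using hedge[of S]
    by (cases "\<Sum>m. ereal (wealth_inf (Vm m) (nm m) (hm m) S)")
      (auto simp: wealth_inf_neg_strategy max_def split: if_splits)
qed

lemma endowment_ge_short_plus_barI_neg_part: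
  assumes nL: "cond_nL U" and "U \<noteq> {}" and "1 \<le> n"
    and P: "pos_gen_portfolio U P" and hedge: "superhedges U (\<lambda>S. ereal (max (wealth_inf V n h S) 0)) P"
  shows "ereal V + barI U (\<lambda>S. ereal (max (- wealth_inf V n h S) 0)) \<le> endowment P"
proof -
  define Vm where "Vm m = fst (P (Suc m))" for m
  define nm where "nm m = fst (snd (P (Suc m)))" for m
  define hm where "hm m = snd (snd (P (Suc m)))" for m
  have pos: "positive_simple U (Vm m, nm m, hm m)" for m
    using P by (simp add: pos_gen_portfolio_def gen_portfolio_def Vm_def nm_def hm_def)
  have endowment: "endowment P = (\<Sum>m. ereal (Vm m))"
    using pos_gen_portfolio_head(1)[OF P \<open>U \<noteq> {}\<close>] by (simp add: Vm_def)
  have total_nonneg: "0 \<le> ereal (wealth (- V) n (neg_strategy h) j S)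
      + (\<Sum>m. ereal (wealth (Vm m) (nm m) (hm m) j S))" if "S \<in> U" for S j
    using hedge pos_gen_portfolio_head(2)[OF P \<open>U \<noteq> {}\<close>] that
    by (intro short_wealth_plus_hedge_nonneg[OF nL \<open>1 \<le> n\<close> pos])
      (auto simp: superhedges_def Vm_def nm_def hm_def)
  have pf_nonneg: "0 \<le> wealth (Vm m) (nm m) (hm m) j S" if "S \<in> U" for m j S
    using positive_simple_wealth_nonneg[OF nL pos that] .
  show ?thesis
  proof (cases "summable Vm")
    case True
    then have "barI U (\<lambda>S. ereal (max (- wealth_inf V n h S) 0)) \<le> ereal (- V + suminf Vm)"
      using barI_pos_part_le[OF \<open>U \<noteq> {}\<close> \<open>1 \<le> n\<close> True pf_nonneg total_nonneg]
      by (simp add: wealth_inf_neg_strategy)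
    then have "ereal V + barI U (\<lambda>S. ereal (max (- wealth_inf V n h S) 0))
        \<le> ereal V + ereal (- V + suminf Vm)"
      by (rule add_left_mono)
    then show ?thesis
      by (simp add: endowment suminf_ereal' True)
  next
    case False
    moreover have "0 \<le> Vm m" for m
      using pos by (simp add: positive_simple_def)
    ultimately show ?thesis
      by (simp add: endowment suminf_ereal_not_summable)
  qed
qed

lemma cond_K_if_cond_nL:
  assumes "cond_nL U" and "U \<noteq> {}"
  shows "cond_K U"
  unfolding cond_K_def
proof (intro allI impI)
  fix V n h assume "simple_portfolio (V, n, h)"
  then have "1 \<le> n"
    by (simp add: simple_portfolio_def)
  show "ereal V + barI U (\<lambda>S. ereal (max (- wealth_inf V n h S) 0))
      \<le> barI U (\<lambda>S. ereal (max (wealth_inf V n h S) 0))"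
    unfolding barI_def[of U "\<lambda>S. ereal (max (wealth_inf V n h S) 0)"]
    using endowment_ge_short_plus_barI_neg_part[OF assms \<open>1 \<le> n\<close>]
    by (auto intro: Inf_greatest)
qed

theorem theorem5p1:
  fixes s0 :: real and T :: "traj set"
  assumes "trajectory_set s0 T"
    and nL: "\<forall>S\<in>T. \<forall>j. barsigma (shifted_cond_space T S j) (\<lambda>_. 0) \<ge> 0"
  shows "\<forall>S\<in>T. \<forall>j. LOP (shifted_cond_space T S j) \<and> cond_K (shifted_cond_space T S j)"
proof (intro ballI allI conjI)
  fix S j assume "S \<in> T"
  \<comment> \<open>The common initial value s0 of the trajectories plays no role.\<close>
  show "LOP (shifted_cond_space T S j)"
    using nL \<open>S \<in> T\<close> by (simp add: LOP_if_barsigma_nonneg)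
  have "cond_nL (shifted_cond_space T S j)"
    using nL \<open>S \<in> T\<close> by (intro cond_nL_shifted_cond_space) (simp_all add: cond_nL_def)
  moreover have "shifted_cond_space T S j \<noteq> {}"
    using \<open>S \<in> T\<close> shift_mem_shifted_cond_space by blast
  ultimately show "cond_K (shifted_cond_space T S j)"
    by (rule cond_K_if_cond_nL)
qed

end
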